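(* Let $\mathrm{FOV}_{\min}\in(0,\pi/2]$, $L_{\max}>0$ and $A_{\max}>0$. Then the set $\mathcal S=\{(B,\mathrm{FOV}): B>0,\ \mathrm{FOV}\in(0,\pi/2],\ \mathrm{FOV}\ge\mathrm{FOV}_{\min},\ L_{\mathrm{ADR}}(B,\mathrm{FOV})\le L_{\max},\ A_{\mathrm{ADR}}(B,\mathrm{FOV})\le A_{\max}\}$ equals $\{(B,\mathrm{FOV}): B>0,\ \mathrm{FOV}\in(0,\pi/2],\ \mathrm{FOV}\ge f_{\mathrm{FOV}}(B)\}$, where $f_{\mathrm{FOV}}(B)=\max\{\mathrm{FOV}_{\min},\,f_{\mathrm L}^{-1}(B),\,f_{\mathrm A}^{-1}(B)\}$. Consequently, maximising $R(B,\mathrm{FOV})$ over $\mathcal S$ is the same problem as maximising $R(B,\mathrm{FOV})$ subject to the single constraint $\mathrm{FOV}\ge f_{\mathrm{FOV}}(B)$ (with $B>0$, $\mathrm{FOV}\in(0,\pi/2]$).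
   Context: Fix constants: an integer $N_{\mathrm{tier}}\ge1$; an integer $N_{\mathrm{PD}}\ge 1$; $\mathrm{FF}\in(0,1]$; $K_{\mathrm{PD}}>0$; $n_{\mathrm{CPC}}\ge 1$; $P_{\mathrm t}>0$; $w>0$; $R_{\mathrm{PD}}>0$; $\Gamma>0$; $N_0>0$. The design variables are $B>0$ and $\mathrm{FOV}\in(0,\pi/2]$. Write $\theta=\theta_{\mathrm{CPC}}=\mathrm{FOV}/(2N_{\mathrm{tier}}+1)$. Define $D_2(B)=\frac{1}{K_{\mathrm{PD}}B}\sqrt{N_{\mathrm{PD}}/\mathrm{FF}}$, $D_1(B,\mathrm{FOV})=D_2(B)\,\frac{n_{\mathrm{CPC}}}{\sin\theta}$, $P_{\mathrm r}(B,\mathrm{FOV})=\mathrm{FF}\,P_{\mathrm t}\Big(1-\exp\Big(-\frac{D_1(B,\mathrm{FOV})^2}{2w^2}\Big)\Big)$, and the achievable rate $R(B,\mathrm{FOV})=B\log_2\Big(1+\frac{(R_{\mathrm{PD}}P_{\mathrm r}(B,\mathrm{FOV}))^2}{\Gamma N_0 B}\Big)$. Set $K_1=\frac{1}{2K_{\mathrm{PD}}}\sqrt{N_{\mathrm{PD}}/\mathrm{FF}}$ and $K_2=\frac{\pi N_{\mathrm{PD}}n_{\mathrm{CPC}}^2}{4\,\mathrm{FF}\,K_{\mathrm{PD}}^2}$, and define $L_{\mathrm{ADR}}(B,\mathrm{FOV})=\frac{K_1}{B}\cdot\frac{n_{\mathrm{CPC}}+\sin\theta}{\sin\theta\,\tan\theta}$,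 $A_{\mathrm{ADR}}(B,\mathrm{FOV})=\frac{K_2}{B^2\sin^2\theta}\Big(1+\sum_{i=1}^{N_{\mathrm{tier}}}6i\cos(2i\theta)\Big)$. Given $L_{\max},A_{\max}>0$, define for $\mathrm{FOV}\in(0,\pi/2]$ the boundary functions (the value of $B$ at which the respective dimension constraint holds with equality) $f_{\mathrm L}(\mathrm{FOV})=\frac{K_1}{L_{\max}}\cdot\frac{n_{\mathrm{CPC}}+\sin\theta}{\sin\theta\tan\theta}$ and $f_{\mathrm A}(\mathrm{FOV})=\frac{1}{\sin\theta}\sqrt{\frac{K_2}{A_{\max}}\Big(1+\sum_{i=1}^{N_{\mathrm{tier}}}6i\cos(2i\theta)\Big)}$, and their (generalised) inverses $f_{\mathrm L}^{-1}(B)=\inf\{\mathrm{FOV}\in(0,\pi/2]: f_{\mathrm L}(\mathrm{FOV})\le B\}$ and $f_{\mathrm A}^{-1}(B)=\inf\{\mathrm{FOV}\in(0,\pi/2]: f_{\mathrm A}(\mathrm{FOV})\le B\}$, with the convention $\inf\emptyset=+\infty$. *)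

theory Defs
  imports "HOL-Analysis.Analysis"
begin

definition thetaCPC :: "nat \<Rightarrow> real \<Rightarrow> real" where
  "thetaCPC Ntier FOV = FOV / (2 * real Ntier + 1)"

definition tierSum :: "nat \<Rightarrow> real \<Rightarrow> real" where
  "tierSum Ntier \<theta> = 1 + (\<Sum>i=1..Ntier. 6 * real i * cos (2 * real i * \<theta>))"

definition K1 :: "real \<Rightarrow> nat \<Rightarrow> real \<Rightarrow> real" where
  "K1 KPD NPD FF = (1 / (2 * KPD)) * sqrt (real NPD / FF)"

definition K2 :: "real \<Rightarrow> nat \<Rightarrow> real \<Rightarrow> real \<Rightarrow> real" where
  "K2 KPD NPD FF nCPC = pi * real NPD * nCPC^2 / (4 * FF * KPD^2)"

definition D2 :: "real \<Rightarrow> nat \<Rightarrow> real \<Rightarrow> real \<Rightarrow> real" where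
  "D2 KPD NPD FF B = (1 / (KPD * B)) * sqrt (real NPD / FF)"

definition D1 :: "real \<Rightarrow> nat \<Rightarrow> real \<Rightarrow> real \<Rightarrow> nat \<Rightarrow> real \<Rightarrow> real \<Rightarrow> real" where
  "D1 KPD NPD FF nCPC Ntier B FOV = D2 KPD NPD FF B * (nCPC / sin (thetaCPC Ntier FOV))"

definition Prx :: "real \<Rightarrow> real \<Rightarrow> real \<Rightarrow> nat \<Rightarrow> real \<Rightarrow> real \<Rightarrow> nat \<Rightarrow> real \<Rightarrow> real \<Rightarrow> real" where
  "Prx Pt w KPD NPD FF nCPC Ntier B FOV =
     FF * Pt * (1 - exp (- ((D1 KPD NPD FF nCPC Ntier B FOV)^2 / (2 * w^2))))"

definition Rate :: "real \<Rightarrow> real \<Rightarrow> real \<Rightarrow> real \<Rightarrow> real \<Rightarrow> real \<Rightarrow> nat \<Rightarrow> real \<Rightarrow> real \<Rightarrow> nat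
                    \<Rightarrow> real \<Rightarrow> real \<Rightarrow> real" where
  "Rate RPD Gam N0 Pt w KPD NPD FF nCPC Ntier B FOV =
     B * log 2 (1 + (RPD * Prx Pt w KPD NPD FF nCPC Ntier B FOV)^2 / (Gam * N0 * B))"

definition L_ADR :: "real \<Rightarrow> nat \<Rightarrow> real \<Rightarrow> real \<Rightarrow> nat \<Rightarrow> real \<Rightarrow> real \<Rightarrow> real" where
  "L_ADR KPD NPD FF nCPC Ntier B FOV =
     (let \<theta> = thetaCPC Ntier FOV in
      (K1 KPD NPD FF / B) * ((nCPC + sin \<theta>) / (sin \<theta> * tan \<theta>)))"

definition A_ADR :: "real \<Rightarrow> nat \<Rightarrow> real \<Rightarrow> real \<Rightarrow> nat \<Rightarrow> real \<Rightarrow> real \<Rightarrow> real" where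
  "A_ADR KPD NPD FF nCPC Ntier B FOV =
     (let \<theta> = thetaCPC Ntier FOV in
      (K2 KPD NPD FF nCPC / (B^2 * (sin \<theta>)^2)) * tierSum Ntier \<theta>)"

definition fL :: "real \<Rightarrow> nat \<Rightarrow> real \<Rightarrow> real \<Rightarrow> nat \<Rightarrow> real \<Rightarrow> real \<Rightarrow> real" where
  "fL KPD NPD FF nCPC Ntier Lmax FOV =
     (let \<theta> = thetaCPC Ntier FOV in
      (K1 KPD NPD FF / Lmax) * ((nCPC + sin \<theta>) / (sin \<theta> * tan \<theta>)))"

definition fA :: "real \<Rightarrow> nat \<Rightarrow> real \<Rightarrow> real \<Rightarrow> nat \<Rightarrow> real \<Rightarrow> real \<Rightarrow> real" where
  "fA KPD NPD FF nCPC Ntier Amax FOV =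
     (let \<theta> = thetaCPC Ntier FOV in
      (1 / sin \<theta>) * sqrt ((K2 KPD NPD FF nCPC / Amax) * tierSum Ntier \<theta>))"

definition genInv :: "(real \<Rightarrow> real) \<Rightarrow> real \<Rightarrow> ereal" where
  "genInv f B = (if {FOV \<in> {0<..pi/2}. f FOV \<le> B} = {} then \<infinity>
                 else ereal (Inf {FOV \<in> {0<..pi/2}. f FOV \<le> B}))"

definition fFOV :: "real \<Rightarrow> nat \<Rightarrow> real \<Rightarrow> real \<Rightarrow> nat \<Rightarrow> real \<Rightarrow> real \<Rightarrow> real \<Rightarrow> real \<Rightarrow> ereal" where
  "fFOV KPD NPD FF nCPC Ntier FOVmin Lmax Amax B =
     max (ereal FOVmin)
         (max (genInv (fL KPD NPD FF nCPC Ntier Lmax) B)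
              (genInv (fA KPD NPD FF nCPC Ntier Amax) B))"

end

theory Submission imports Defs begin

text \<open>Both dimension constraints can be solved for the bandwidth: L_ADR is at most Lmax iff
  fL FOV is at most B, and likewise for the area. Since theta = FOV/(2 Ntier + 1) stays in (0, pi/6],
  where sin increases and cot and the tier sum decrease, fL and fA are continuous and antitone in FOV.
  For such a function the sublevel set at level B is an interval closed on the left, so
  genInv f B \<le> FOV holds exactly when f FOV \<le> B; the set S is therefore cut out by the single
  condition FOV \<ge> fFOV B, and the two optimisation problems coincide because their feasible
  sets do.\<close>

lemma isCont_le_of_right_le:
  fixes f :: "real \<Rightarrow> real"
  assumes "isCont f x" "x < b" "\<And>z. x < z \<Longrightarrow> z \<le> b \<Longrightarrow> f z \<le> B"
  shows "f x \<le> B"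
proof -
  have "(f \<longlongrightarrow> f x) (at_right x)"
    using assms(1) by (simp add: isCont_def filterlim_at_split)
  moreover have "eventually (\<lambda>z. f z \<le> B) (at_right x)"
    unfolding eventually_at_right_field using assms(2,3) by (intro exI[of _ b]) auto
  ultimately show ?thesis by (rule tendsto_upperbound) simp
qed

lemma genInv_le_iff:
  fixes f :: "real \<Rightarrow> real"
  assumes anti: "\<And>x y. 0 < x \<Longrightarrow> x \<le> y \<Longrightarrow> y \<le> pi/2 \<Longrightarrow> f y \<le> f x"
    and cont: "\<And>x. 0 < x \<Longrightarrow> x \<le> pi/2 \<Longrightarrow> isCont f x"
    and x: "0 < x" "x \<le> pi/2"
  shows "genInv f B \<le> ereal x \<longleftrightarrow> f x \<le> B"
proof -
  define M where "M = {FOV \<in> {0<..pi/2}. f FOV \<le> B}"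
  have bdd: "bdd_below M" unfolding M_def by (rule bdd_belowI[of _ 0]) auto
  have genInv_M: "genInv f B = (if M = {} then \<infinity> else ereal (Inf M))"
    unfolding genInv_def M_def by simp
  show ?thesis
  proof
    assume "f x \<le> B"
    then have "x \<in> M" using x unfolding M_def by auto
    then show "genInv f B \<le> ereal x" using genInv_M cInf_lower[OF _ bdd] by auto
  next
    assume "genInv f B \<le> ereal x"
    then have ne: "M \<noteq> {}" and Inf_le: "Inf M \<le> x" using genInv_M by (auto split: if_splits)
    have right: "f z \<le> B" if "x < z" "z \<le> pi/2" for z
    proof -
      have "Inf M < z" using Inf_le that(1) by linarith
      then obtain y where "y \<in> M" "y < z" using cInf_less_iff[OF ne bdd] by auto
      then show ?thesis using anti[of y z] that unfolding M_def by auto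
    qed
    show "f x \<le> B"
    proof (cases "x = pi/2")
      case True
      obtain y where y: "y \<in> M" using ne by auto
      then have "0 < y" "y \<le> x" "f y \<le> B" using True unfolding M_def by auto
      then show ?thesis using anti[of y x] x by linarith
    next
      case False
      with x have "x < pi/2" by simp
      then show ?thesis using isCont_le_of_right_le[OF cont[OF x]] right by blast
    qed
  qed
qed

lemma thetaCPC_mono: "x \<le> y \<Longrightarrow> thetaCPC N x \<le> thetaCPC N y"
  by (simp add: thetaCPC_def divide_right_mono)

lemma thetaCPC_bounds:
  assumes "Ntier \<ge> 1" "0 < x" "x \<le> pi/2"
  shows "0 < thetaCPC Ntier x" and "thetaCPC Ntier x \<le> pi/6"
    and "\<And>i. i \<le> Ntier \<Longrightarrow> 2 * real i * thetaCPC Ntier x < pi/2"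
proof -
  show pos: "0 < thetaCPC Ntier x" using assms by (simp add: thetaCPC_def)
  have "x / (2 * real Ntier + 1) \<le> x / 3" using assms by (intro divide_left_mono) auto
  then show "thetaCPC Ntier x \<le> pi/6" using assms unfolding thetaCPC_def by linarith
  fix i assume "i \<le> Ntier"
  then have "2 * real i * thetaCPC Ntier x \<le> 2 * real Ntier * thetaCPC Ntier x"
    using pos by (intro mult_right_mono) auto
  also have "\<dots> < (2 * real Ntier + 1) * thetaCPC Ntier x"
    using pos by (intro mult_strict_right_mono) auto
  also have "\<dots> = x" by (simp add: thetaCPC_def)
  finally show "2 * real i * thetaCPC Ntier x < pi/2" using assms by simp
qed

lemma sin_thetaCPC_pos:
  assumes "Ntier \<ge> 1" "0 < x" "x \<le> pi/2"
  shows "0 < sin (thetaCPC Ntier x)"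
  using thetaCPC_bounds[OF assms] by (intro sin_gt_zero) auto

lemma tierSum_ge_1:
  assumes "Ntier \<ge> 1" "0 < x" "x \<le> pi/2"
  shows "1 \<le> tierSum Ntier (thetaCPC Ntier x)"
proof -
  have "0 \<le> 6 * real i * cos (2 * real i * thetaCPC Ntier x)" if "i \<in> {1..Ntier}" for i
  proof -
    have "0 \<le> 2 * real i * thetaCPC Ntier x" "2 * real i * thetaCPC Ntier x < pi/2"
      using thetaCPC_bounds[OF assms] that by auto
    then show ?thesis by (intro mult_nonneg_nonneg cos_ge_zero) auto
  qed
  then have "0 \<le> (\<Sum>i=1..Ntier. 6 * real i * cos (2 * real i * thetaCPC Ntier x))"
    by (rule sum_nonneg)
  then show ?thesis unfolding tierSum_def by simp
qed

lemma tierSum_antimono: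
  assumes "Ntier \<ge> 1" "0 < x" "x \<le> y" "y \<le> pi/2"
  shows "tierSum Ntier (thetaCPC Ntier y) \<le> tierSum Ntier (thetaCPC Ntier x)"
proof -
  have "cos (2 * real i * thetaCPC Ntier y) \<le> cos (2 * real i * thetaCPC Ntier x)"
    if "i \<in> {1..Ntier}" for i
  proof (rule cos_monotone_0_pi_le)
    show "0 \<le> 2 * real i * thetaCPC Ntier x"
      using thetaCPC_bounds(1)[OF assms(1,2)] assms by simp
    show "2 * real i * thetaCPC Ntier x \<le> 2 * real i * thetaCPC Ntier y"
      using thetaCPC_mono[OF assms(3)] by (simp add: mult_left_mono)
    show "2 * real i * thetaCPC Ntier y \<le> pi"
      using thetaCPC_bounds(3)[OF assms(1) _ assms(4)] assms that by force
  qed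
  then show ?thesis unfolding tierSum_def by (auto intro!: sum_mono mult_left_mono)
qed

lemma cot_ratio_eq:
  assumes "0 < sin t" "0 < cos t"
  shows "(n + sin t) / (sin t * tan t) = n * cos t / (sin t)\<^sup>2 + cos t / sin t"
  using assms by (simp add: tan_def power2_eq_square divide_simps) (simp add: algebra_simps)

lemma cot_ratio_antimono:
  fixes n t u :: real
  assumes "0 \<le> n" "0 < t" "t \<le> u" "u < pi/2"
  shows "(n + sin u) / (sin u * tan u) \<le> (n + sin t) / (sin t * tan t)"
proof -
  have sin: "0 < sin t" "sin t \<le> sin u" using assms by (auto intro!: sin_gt_zero sin_monotone_2pi_le)
  have cos: "0 < cos u" "cos u \<le> cos t" using assms by (auto intro!: cos_gt_zero cos_monotone_0_pi_le)
  have "cos u / (sin u)\<^sup>2 \<le> cos t / (sin t)\<^sup>2"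
    using sin cos by (intro frac_le power_mono) auto
  moreover have "cos u / sin u \<le> cos t / sin t" using sin cos by (intro frac_le) auto
  ultimately have "n * (cos u / (sin u)\<^sup>2) + cos u / sin u \<le> n * (cos t / (sin t)\<^sup>2) + cos t / sin t"
    using assms(1) by (intro add_mono mult_left_mono)
  moreover have "0 < cos t" using cos by linarith
  ultimately show ?thesis using sin cos by (simp add: cot_ratio_eq times_divide_eq_right)
qed

lemma fL_antimono:
  assumes "Ntier \<ge> 1" "0 < x" "x \<le> y" "y \<le> pi/2" "0 < K1 KPD NPD FF" "0 < Lmax" "0 \<le> nCPC"
  shows "fL KPD NPD FF nCPC Ntier Lmax y \<le> fL KPD NPD FF nCPC Ntier Lmax x"
proof -
  have "thetaCPC Ntier y < pi/2" using thetaCPC_bounds(2)[OF assms(1) _ assms(4)] assms by force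
  then show ?thesis
    unfolding fL_def Let_def using assms thetaCPC_bounds(1)[OF assms(1,2)]
    by (intro mult_left_mono cot_ratio_antimono thetaCPC_mono) auto
qed

lemma fA_antimono:
  assumes "Ntier \<ge> 1" "0 < x" "x \<le> y" "y \<le> pi/2" "0 < K2 KPD NPD FF nCPC" "0 < Amax"
  shows "fA KPD NPD FF nCPC Ntier Amax y \<le> fA KPD NPD FF nCPC Ntier Amax x"
proof -
  let ?sx = "sin (thetaCPC Ntier x)" and ?sy = "sin (thetaCPC Ntier y)"
  let ?c = "K2 KPD NPD FF nCPC / Amax"
  have x: "x \<le> pi/2" and y: "0 < y" using assms by linarith+
  have "?sx \<le> ?sy"
    using thetaCPC_bounds[OF assms(1,2) x] thetaCPC_bounds[OF assms(1) y assms(4)] thetaCPC_mono[OF assms(3)]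
    by (intro sin_monotone_2pi_le) auto
  then have "1 / ?sy \<le> 1 / ?sx" using sin_thetaCPC_pos[OF assms(1,2) x] by (intro divide_left_mono) auto
  moreover have "sqrt (?c * tierSum Ntier (thetaCPC Ntier y)) \<le> sqrt (?c * tierSum Ntier (thetaCPC Ntier x))"
    using tierSum_antimono[OF assms(1-4)] assms(5,6) by (intro real_sqrt_le_mono mult_left_mono) auto
  moreover have "0 \<le> 1 / ?sx" using sin_thetaCPC_pos[OF assms(1,2) x] by simp
  ultimately show ?thesis
    unfolding fA_def Let_def using tierSum_ge_1[OF assms(1) y assms(4)] assms(5,6)
    by (intro mult_mono) auto
qed

lemma fL_isCont:
  assumes "Ntier \<ge> 1" "0 < x" "x \<le> pi/2"
  shows "isCont (fL KPD NPD FF nCPC Ntier Lmax) x"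
proof -
  have "0 < cos (thetaCPC Ntier x)"
    using thetaCPC_bounds[OF assms] by (intro cos_gt_zero) auto
  then show ?thesis
    using sin_thetaCPC_pos[OF assms] unfolding fL_def Let_def thetaCPC_def
    by (intro continuous_intros) (auto simp: tan_def)
qed

lemma fA_isCont:
  assumes "Ntier \<ge> 1" "0 < x" "x \<le> pi/2"
  shows "isCont (fA KPD NPD FF nCPC Ntier Amax) x"
  using sin_thetaCPC_pos[OF assms] unfolding fA_def Let_def thetaCPC_def tierSum_def
  by (intro continuous_intros) auto

lemma L_ADR_le_iff:
  assumes "0 < B" "0 < Lmax"
  shows "L_ADR KPD NPD FF nCPC Ntier B x \<le> Lmax \<longleftrightarrow> fL KPD NPD FF nCPC Ntier Lmax x \<le> B"
proof -
  have "K / B * G \<le> Lmax \<longleftrightarrow> K / Lmax * G \<le> B" for K G :: real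
    using assms by (simp add: field_simps mult.commute)
  then show ?thesis unfolding L_ADR_def fL_def Let_def .
qed

lemma scaled_inverse_square_le_iff:
  fixes K T B A s :: real
  assumes "0 < B" "0 < A" "0 < s" "0 \<le> K" "0 \<le> T"
  shows "K / (B\<^sup>2 * s\<^sup>2) * T \<le> A \<longleftrightarrow> 1 / s * sqrt (K / A * T) \<le> B"
proof -
  have "K / (B\<^sup>2 * s\<^sup>2) * T \<le> A \<longleftrightarrow> K / A * T \<le> (B * s)\<^sup>2"
    using assms by (simp add: field_simps power_mult_distrib)
  also have "\<dots> \<longleftrightarrow> sqrt (K / A * T) \<le> B * s"
    using assms by (auto intro: real_le_lsqrt dest: sqrt_le_D)
  also have "\<dots> \<longleftrightarrow> 1 / s * sqrt (K / A * T) \<le> B"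
    using assms by (simp add: field_simps)
  finally show ?thesis .
qed

lemma A_ADR_le_iff:
  assumes "Ntier \<ge> 1" "0 < x" "x \<le> pi/2" "0 < B" "0 < Amax" "0 \<le> K2 KPD NPD FF nCPC"
  shows "A_ADR KPD NPD FF nCPC Ntier B x \<le> Amax \<longleftrightarrow> fA KPD NPD FF nCPC Ntier Amax x \<le> B"
  using scaled_inverse_square_le_iff[OF assms(4,5) sin_thetaCPC_pos[OF assms(1-3)] assms(6)]
    tierSum_ge_1[OF assms(1-3)]
  unfolding A_ADR_def fA_def Let_def by simp

theorem mainTheorem6:
  fixes Ntier NPD :: nat
    and FF KPD nCPC Pt w RPD Gam N0 FOVmin Lmax Amax :: real
  assumes "Ntier \<ge> 1" and "NPD \<ge> 1"
    and "0 < FF" and "FF \<le> 1" and "0 < KPD" and "nCPC \<ge> 1"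
    and "0 < Pt" and "0 < w" and "0 < RPD" and "0 < Gam" and "0 < N0"
    and "0 < FOVmin" and "FOVmin \<le> pi/2" and "0 < Lmax" and "0 < Amax"
  defines "S \<equiv> {(B, FOV). 0 < B \<and> FOV \<in> {0<..pi/2} \<and> FOV \<ge> FOVmin
              \<and> L_ADR KPD NPD FF nCPC Ntier B FOV \<le> Lmax
              \<and> A_ADR KPD NPD FF nCPC Ntier B FOV \<le> Amax}"
    and "T \<equiv> {(B, FOV). 0 < B \<and> FOV \<in> {0<..pi/2}
              \<and> ereal FOV \<ge> fFOV KPD NPD FF nCPC Ntier FOVmin Lmax Amax B}"
    and "R \<equiv> (\<lambda>(B, FOV). Rate RPD Gam N0 Pt w KPD NPD FF nCPC Ntier B FOV)"
  shows "S = T \<and>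
         (\<forall>p. (p \<in> S \<and> (\<forall>q\<in>S. R q \<le> R p)) \<longleftrightarrow> (p \<in> T \<and> (\<forall>q\<in>T. R q \<le> R p)))"
proof -
  have K1_pos: "0 < K1 KPD NPD FF" using assms(2,3,5) by (simp add: K1_def)
  have K2_pos: "0 < K2 KPD NPD FF nCPC" using assms(2,3,5,6) by (simp add: K2_def)
  have genInv_fL: "genInv (fL KPD NPD FF nCPC Ntier Lmax) B \<le> ereal x \<longleftrightarrow> fL KPD NPD FF nCPC Ntier Lmax x \<le> B"
    if "0 < x" "x \<le> pi/2" for B x
    using assms(1,6,14) K1_pos
    by (intro genInv_le_iff fL_antimono fL_isCont that) auto
  have genInv_fA: "genInv (fA KPD NPD FF nCPC Ntier Amax) B \<le> ereal x \<longleftrightarrow> fA KPD NPD FF nCPC Ntier Amax x \<le> B"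
    if "0 < x" "x \<le> pi/2" for B x
    using assms(1,15) K2_pos
    by (intro genInv_le_iff fA_antimono fA_isCont that) auto
  have "S = T"
    unfolding S_def T_def fFOV_def
    using L_ADR_le_iff[OF _ assms(14)] A_ADR_le_iff[OF assms(1) _ _ _ assms(15)] K2_pos
      genInv_fL genInv_fA
    by (auto simp: less_imp_le)
  then show ?thesis by simp
qed

end
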